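(* Let $X$ be a nonempty set and $F\colon X^*\to X\cup\{\varepsilon\}$ an $\varepsilon$-standard operation. The following are equivalent: (i) $F$ is associative and range-idempotent; (ii) $F$ is associative and $F(F(x),F(x))=F(x)$ for every $x\in X$; (iii) $F$ is preassociative, unarily quasi-range-idempotent, and range-idempotent; (iv) $F$ is preassociative, unarily quasi-range-idempotent, and satisfies $F_1\circ F_1=F_1$ and $F(F(x),F(x))=F(x)$ for every $x\in X$.
   Context: $X^*=\bigcup_{n\geqslant 0}X^n$ is the set of finite tuples over $X$, $X^0=\{\varepsilon\}$ with $\varepsilon\notin X$ the empty tuple; $F(\mathbf{x},\mathbf{y})$ denotes $F$ applied to the concatenation, concatenation with $\varepsilon$ leaving tuples unchanged. $F_n=F|_{X^n}$, $F^{\flat}=F|_{X^*\setminus\{\varepsilon\}}$. $F$ is $\varepsilon$-standard if $F(\varepsilon)=\varepsilon$ and $F(\mathbf{x})\neq\varepsilon$ for $\mathbf{x}\neq\varepsilon$. $F$ is associative if $F(\mathbf{x},\mathbf{y},\mathbf{z})=F(\mathbf{x},F(\mathbf{y}),\mathbf{z})$ for all $\mathbf{x},\mathbf{y},\mathbf{z}\in X^*$ (a value $\varepsilon$ treated as the empty tuple). $F$ is preassociative if $F(\mathbf{y})=F(\mathbf{y}')$ implies $F(\mathbf{x},\mathbf{y},\mathbf{z})=F(\mathbf{x},\mathbf{y}',\mathbf{z})$ for all tuples. $F$ is unarily quasi-range-idempotent if $\mathrm{ran}(F_1)=\mathrm{ran}(F^{\flat})$. $F$ is range-idempotent if $F(x,\ldots,x)=x$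 ($x$ repeated $k$ times) for every $x\in\mathrm{ran}(F^{\flat})$ and every integer $k\geqslant 1$. *)

theory Defs
  imports Main
begin

text \<open>Tuples over X are lists over the type 'a (X = UNIV, nonempty as every type);
  the empty tuple is []. Values of F lie in X \<union> {epsilon}, modelled as 'a option with
  None = epsilon.\<close>

definition tup :: "'a option \<Rightarrow> 'a list" where
  "tup v = (case v of None \<Rightarrow> [] | Some x \<Rightarrow> [x])"

definition eps_standard :: "('a list \<Rightarrow> 'a option) \<Rightarrow> bool" where
  "eps_standard F \<longleftrightarrow> F [] = None \<and> (\<forall>xs. xs \<noteq> [] \<longrightarrow> F xs \<noteq> None)"

definition associative :: "('a list \<Rightarrow> 'a option) \<Rightarrow> bool" where
  "associative F \<longleftrightarrow> (\<forall>xs ys zs. F (xs @ ys @ zs) = F (xs @ tup (F ys) @ zs))"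

definition preassociative :: "('a list \<Rightarrow> 'a option) \<Rightarrow> bool" where
  "preassociative F \<longleftrightarrow>
     (\<forall>ys ys'. F ys = F ys' \<longrightarrow> (\<forall>xs zs. F (xs @ ys @ zs) = F (xs @ ys' @ zs)))"

definition ran_F1 :: "('a list \<Rightarrow> 'a option) \<Rightarrow> 'a option set" where
  "ran_F1 F = {F [x] | x. True}"

definition ran_Fflat :: "('a list \<Rightarrow> 'a option) \<Rightarrow> 'a option set" where
  "ran_Fflat F = {F xs | xs. xs \<noteq> []}"

definition unarily_quasi_range_idempotent :: "('a list \<Rightarrow> 'a option) \<Rightarrow> bool" where
  "unarily_quasi_range_idempotent F \<longleftrightarrow> ran_F1 F = ran_Fflat F"

definition range_idempotent :: "('a list \<Rightarrow> 'a option) \<Rightarrow> bool" where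
  "range_idempotent F \<longleftrightarrow>
     (\<forall>y \<in> ran_Fflat F. \<forall>k::nat. k \<ge> 1 \<longrightarrow> F (concat (replicate k (tup y))) = y)"

end

theory Submission
  imports Defs
begin

text \<open>Under preassociativity, associativity amounts to the single requirement that every value
  \<open>a\<close> taken by \<open>F\<close> be fixed by \<open>F\<^sub>1\<close>: then \<open>F(y) = F(F(y))\<close> and preassociativity lets one
  replace \<open>y\<close> by \<open>F(y)\<close> inside any tuple. Each of the four conditions forces this, using
  \<open>k = 1\<close> in range-idempotence, or quasi-range-idempotence together with \<open>F\<^sub>1 \<circ> F\<^sub>1 = F\<^sub>1\<close>.
  Conversely, for associative \<open>F\<close> range-idempotence follows from the case \<open>k = 2\<close>, since
  \<open>F(a, \<dots>, a)\<close> can be evaluated by folding in one \<open>a\<close> at a time.\<close>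

lemma eps_standard_Some:
  assumes "eps_standard F" and "xs \<noteq> []"
  obtains a where "F xs = Some a"
  using assms unfolding eps_standard_def by blast

lemma tup_Some [simp]: "tup (Some a) = [a]"
  by (simp add: tup_def)

lemma associative_F_tup_F:
  assumes "associative F"
  shows "F (tup (F ys)) = F ys"
  using assms unfolding associative_def by (metis append_Nil append_Nil2)

lemma associative_value_fixed:
  assumes "associative F" and "F ys = Some a"
  shows "F [a] = Some a"
  using associative_F_tup_F[OF assms(1), of ys] assms(2) by simp

lemma associative_imp_preassociative: "associative F \<Longrightarrow> preassociative F"
  unfolding associative_def preassociative_def by metis

lemma preassociative_imp_associative:
  assumes es: "eps_standard F" and pa: "preassociative F"
    and fixed: "\<And>ys a. ys \<noteq> [] \<Longrightarrow> F ys = Some a \<Longrightarrow> F [a] = Some a"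
  shows "associative F"
  unfolding associative_def
proof (intro allI)
  fix xs ys zs
  show "F (xs @ ys @ zs) = F (xs @ tup (F ys) @ zs)"
  proof (cases "ys = []")
    case True
    then show ?thesis using es by (simp add: eps_standard_def tup_def)
  next
    case False
    then obtain a where a: "F ys = Some a" using es eps_standard_Some by metis
    with False fixed have "F [a] = F ys" by simp
    then have "F (xs @ [a] @ zs) = F (xs @ ys @ zs)"
      using pa unfolding preassociative_def by blast
    then show ?thesis using a by simp
  qed
qed

lemma associative_unarily_quasi_range_idempotent:
  assumes es: "eps_standard F" and as: "associative F"
  shows "unarily_quasi_range_idempotent F"
proof -
  have "ran_Fflat F \<subseteq> ran_F1 F"
  proof
    fix y assume "y \<in> ran_Fflat F"
    then obtain xs where xs: "xs \<noteq> []" "y = F xs" unfolding ran_Fflat_def by blast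
    then obtain a where "y = Some a" using es eps_standard_Some by metis
    then have "F [a] = y" using associative_value_fixed[OF as] xs(2) by simp
    then show "y \<in> ran_F1 F" unfolding ran_F1_def by blast
  qed
  moreover have "ran_F1 F \<subseteq> ran_Fflat F" unfolding ran_F1_def ran_Fflat_def by blast
  ultimately show ?thesis unfolding unarily_quasi_range_idempotent_def by blast
qed

lemma unarily_quasi_range_idempotent_value_fixed:
  assumes "unarily_quasi_range_idempotent F" and F1_idem: "\<forall>x. F (tup (F [x])) = F [x]"
    and "ys \<noteq> []" and "F ys = Some a"
  shows "F [a] = Some a"
proof -
  have "Some a \<in> ran_F1 F"
    using assms(1,3,4) unfolding unarily_quasi_range_idempotent_def ran_Fflat_def by force
  then obtain x where "F [x] = Some a" unfolding ran_F1_def by auto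
  then show ?thesis using F1_idem by (metis tup_Some)
qed

lemma range_idempotent_value_fixed:
  assumes "range_idempotent F" and "ys \<noteq> []" and "F ys = Some a"
  shows "F [a] = Some a"
proof -
  have "Some a \<in> ran_Fflat F" using assms(2,3) unfolding ran_Fflat_def by force
  then have "F (concat (replicate 1 (tup (Some a)))) = Some a"
    using assms(1) unfolding range_idempotent_def by blast
  then show ?thesis by simp
qed

lemma range_idempotent_binary:
  assumes "range_idempotent F"
  shows "F (tup (F [x]) @ tup (F [x])) = F [x]"
proof -
  have "F [x] \<in> ran_Fflat F" unfolding ran_Fflat_def by blast
  then have "F (concat (replicate 2 (tup (F [x])))) = F [x]"
    using assms unfolding range_idempotent_def by (meson one_le_numeral)
  then show ?thesis by (simp add: numeral_2_eq_2)
qed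

lemma associative_replicate:
  assumes as: "associative F" and a1: "F [a] = Some a" and a2: "F [a, a] = Some a"
  shows "F (replicate (Suc m) a) = Some a"
proof (induction m)
  case 0
  then show ?case using a1 by simp
next
  case (Suc m)
  have "F (replicate (Suc (Suc m)) a) = F ([] @ replicate (Suc m) a @ [a])"
    by (metis append_Nil replicate_Suc replicate_append_same)
  also have "\<dots> = F ([] @ tup (F (replicate (Suc m) a)) @ [a])"
    using as unfolding associative_def by blast
  also have "\<dots> = Some a" using Suc.IH a2 by simp
  finally show ?case .
qed

lemma associative_range_idempotentI:
  assumes es: "eps_standard F" and as: "associative F"
    and binary: "\<forall>x. F (tup (F [x]) @ tup (F [x])) = F [x]"
  shows "range_idempotent F"
  unfolding range_idempotent_def
proof (intro ballI allI impI)
  fix y and k :: nat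
  assume "y \<in> ran_Fflat F" and k: "1 \<le> k"
  then obtain xs where xs: "xs \<noteq> []" "y = F xs" unfolding ran_Fflat_def by blast
  then obtain a where a: "y = Some a" using es eps_standard_Some by metis
  have a1: "F [a] = Some a" using associative_value_fixed[OF as] xs(2) a by simp
  have a2: "F [a, a] = Some a" using binary[rule_format, of a] a1 by simp
  obtain m where "k = Suc m" using k by (metis Suc_pred' less_eq_Suc_le One_nat_def)
  moreover have "concat (replicate k (tup y)) = replicate k a"
    using a by (induction k) auto
  ultimately show "F (concat (replicate k (tup y))) = y"
    using associative_replicate[OF as a1 a2] a by simp
qed

theorem lemma5p6:
  fixes F :: "'a list \<Rightarrow> 'a option"
  assumes "eps_standard F"
  shows "((associative F \<and> range_idempotent F)
          \<longleftrightarrow> (associative F \<and> (\<forall>x. F (tup (F [x]) @ tup (F [x])) = F [x])))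
       \<and> ((associative F \<and> range_idempotent F)
          \<longleftrightarrow> (preassociative F \<and> unarily_quasi_range_idempotent F \<and> range_idempotent F))
       \<and> ((associative F \<and> range_idempotent F)
          \<longleftrightarrow> (preassociative F \<and> unarily_quasi_range_idempotent F
               \<and> (\<forall>x. F (tup (F [x])) = F [x])
               \<and> (\<forall>x. F (tup (F [x]) @ tup (F [x])) = F [x])))"
proof -
  have i_iff_ii: "associative F \<and> range_idempotent F
      \<longleftrightarrow> associative F \<and> (\<forall>x. F (tup (F [x]) @ tup (F [x])) = F [x])"
    using associative_range_idempotentI[OF assms] range_idempotent_binary by auto
  have iii_imp_assoc: "associative F"
    if "preassociative F" "range_idempotent F"
    using preassociative_imp_associative[OF assms that(1)]
      range_idempotent_value_fixed[OF that(2)] by blast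
  have iv_imp_assoc: "associative F"
    if "preassociative F" "unarily_quasi_range_idempotent F" "\<forall>x. F (tup (F [x])) = F [x]"
    using preassociative_imp_associative[OF assms that(1)]
      unarily_quasi_range_idempotent_value_fixed[OF that(2,3)] by blast
  have assoc_imp_pa_uq: "preassociative F \<and> unarily_quasi_range_idempotent F"
    if "associative F"
    using associative_imp_preassociative associative_unarily_quasi_range_idempotent[OF assms]
      that by blast
  show ?thesis
    using i_iff_ii iii_imp_assoc iv_imp_assoc assoc_imp_pa_uq associative_F_tup_F
    by metis
qed

end
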